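(* Let $K\subset\mathbb R^{2d-2}$ be a compact set such that $\pi_0(K)$ has non-empty interior in $\mathbb R^{d-1}$, where $\pi_0:\mathbb R^{2d-2}\to\mathbb R^{d-1}$ is the projection onto the first $d-1$ coordinates. Writing points of $K$ as $(\mathbf v,\mathbf a)$ with $\mathbf v,\mathbf a\in\mathbb R^{d-1}$, let $$\mathbb K_0=\bigcup_{(\mathbf v,\mathbf a)\in K}\{(\mathbf a,0)+t(\mathbf v,1): t\in[0,1]\}\subset\mathbb R^d.$$ Then some finite union of rotated copies of $\mathbb K_0$ is a Kakeya set in $\mathbb R^d$.
   Context: A Kakeya set in $\mathbb R^d$ is a compact set containing a unit line segment in every direction. *)

theory Defs
  imports "HOL-Analysis.Analysis"
begin

text \<open>R^(d-1) is modelled as real^'n (d-1 = CARD('n) \<ge> 1), and R^d as real^('n option):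
  the coordinates Some i are the first d-1 coordinates, None is the last one.\<close>

definition embed :: "real^'n \<Rightarrow> real \<Rightarrow> real^('n option)" where
  "embed a s = (\<chi> j. case j of None \<Rightarrow> s | Some i \<Rightarrow> a $ i)"

definition kakeya_set :: "'a::euclidean_space set \<Rightarrow> bool" where
  "kakeya_set S \<longleftrightarrow> compact S \<and>
     (\<forall>e. norm e = 1 \<longrightarrow> (\<exists>x. closed_segment x (x + e) \<subseteq> S))"

definition rotation :: "(real^'m \<Rightarrow> real^'m) \<Rightarrow> bool" where
  "rotation f \<longleftrightarrow> orthogonal_transformation f \<and> det (matrix f) = 1"

definition K0_set :: "((real^'n) \<times> (real^'n)) set \<Rightarrow> (real^('n option)) set" where
  "K0_set K = (\<Union>(v, a)\<in>K. {embed a 0 + t *\<^sub>R embed v 1 | t. t \<in> {0..1}})"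

end

theory Submission
  imports Defs
begin

text \<open>If \<open>(v, a) \<in> K\<close>, then \<open>K\<^sub>0\<close> contains the segment from \<open>(a, 0)\<close> to \<open>(a + v, 1)\<close>, hence a
  segment of length 1 in every unit direction \<open>w\<close> that is a positive multiple of \<open>(v, 1)\<close>
  (the last coordinate of such a \<open>w\<close> is at most 1). As \<open>v\<close> ranges over the interior of
  \<open>\<pi>\<^sub>0(K)\<close>, these directions form a non-empty open subset of the unit sphere. By compactness
  finitely many rotated copies of it cover the sphere, and the same rotations of \<open>K\<^sub>0\<close> give a
  Kakeya set.\<close>

lemma rotation_linear: "rotation f \<Longrightarrow> linear f"
  by (simp add: rotation_def orthogonal_transformation_linear)

lemma rotation_mapsto:
  fixes u e :: "real^'m"
  assumes "2 \<le> CARD('m)" and "norm u = norm e"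
  obtains f where "rotation f" and "f u = e"
  using rotation_exists[OF assms] unfolding rotation_def by metis

lemma open_rotation_image:
  assumes "rotation f" and "open U"
  shows "open (f ` U)"
proof -
  have "orthogonal_transformation f"
    using assms(1) by (simp add: rotation_def)
  then show ?thesis
    using open_bijective_linear_image_eq[OF orthogonal_transformation_linear
        orthogonal_transformation_bij] assms(2) by blast
qed

lemma finite_rotations_cover_sphere:
  fixes U :: "(real^'m) set"
  assumes "2 \<le> CARD('m)" and "open U" and "u \<in> U" and "norm u = 1"
  obtains F where "finite F" and "\<forall>f\<in>F. rotation f" and "sphere 0 1 \<subseteq> (\<Union>f\<in>F. f ` U)"
proof -
  have "\<exists>f. rotation f \<and> f u = e" if "e \<in> sphere 0 1" for e
    using rotation_mapsto[OF assms(1), of u e] that assms(4) by auto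
  then obtain r where r: "\<And>e. e \<in> sphere 0 1 \<Longrightarrow> rotation (r e) \<and> r e u = e"
    by metis
  have "sphere 0 1 \<subseteq> (\<Union>e\<in>sphere 0 1. r e ` U)"
  proof
    fix e :: "real^'m" assume e: "e \<in> sphere 0 1"
    then have "e \<in> r e ` U"
      using r[OF e] assms(3) by (metis imageI)
    then show "e \<in> (\<Union>e\<in>sphere 0 1. r e ` U)"
      using e by blast
  qed
  moreover have "open (r e ` U)" if "e \<in> sphere 0 1" for e
    using r[OF that] open_rotation_image assms(2) by blast
  ultimately obtain C where "C \<subseteq> sphere 0 1" "finite C" "sphere 0 1 \<subseteq> (\<Union>e\<in>C. r e ` U)"
    using compactE_image[OF compact_sphere, of "sphere 0 1" "\<lambda>e. r e ` U"] by blast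
  then show ?thesis
    by (intro that[of "r ` C"]) (use r in auto)
qed

lemma kakeya_set_finite_rotation_images:
  fixes S :: "(real^'m) set"
  assumes "2 \<le> CARD('m)" and "compact S"
    and "open U" and "u \<in> U" and "norm u = 1"
    and segment: "\<And>w. w \<in> U \<Longrightarrow> norm w = 1 \<Longrightarrow> \<exists>x. closed_segment x (x + w) \<subseteq> S"
  shows "\<exists>F. finite F \<and> (\<forall>f\<in>F. rotation f) \<and> kakeya_set (\<Union>f\<in>F. f ` S)"
proof -
  obtain F where F: "finite F" "\<forall>f\<in>F. rotation f" "sphere 0 1 \<subseteq> (\<Union>f\<in>F. f ` U)"
    using finite_rotations_cover_sphere[OF assms(1,3-5)] .
  have "compact (f ` S)" if "f \<in> F" for f
    using F(2) that assms(2) rotation_linear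
    by (metis compact_continuous_image linear_continuous_on linear_linear)
  then have "compact (\<Union>f\<in>F. f ` S)"
    using F(1) by blast
  moreover have "\<exists>x. closed_segment x (x + e) \<subseteq> (\<Union>f\<in>F. f ` S)" if e1: "norm e = 1" for e
  proof -
    obtain f w where f: "f \<in> F" and "w \<in> U" and e: "e = f w"
      using F(3) e1 by force
    have f_rot: "orthogonal_transformation f" and f_lin: "linear f"
      using F(2) f by (auto simp: rotation_def orthogonal_transformation_linear)
    have "norm w = 1"
      using e1 e orthogonal_transformation_norm[OF f_rot] by simp
    then obtain x where x: "closed_segment x (x + w) \<subseteq> S"
      using segment \<open>w \<in> U\<close> by blast
    have "closed_segment (f x) (f x + e) = f ` closed_segment x (x + w)"
      using closed_segment_linear_image[OF f_lin, of x "x + w"] e linear_add[OF f_lin, of x w]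
      by simp
    also have "\<dots> \<subseteq> (\<Union>f\<in>F. f ` S)"
      using x f by blast
    finally show ?thesis by blast
  qed
  ultimately show ?thesis
    using F(1,2) unfolding kakeya_set_def by blast
qed

lemma embed_None [simp]: "embed a s $ None = s"
  by (simp add: embed_def)

lemma embed_Some [simp]: "embed a s $ Some i = a $ i"
  by (simp add: embed_def)

lemma continuous_on_embed:
  assumes "continuous_on S f" and "continuous_on S g"
  shows "continuous_on S (\<lambda>x. embed (f x) (g x))"
  unfolding embed_def
proof (rule continuous_on_vec_lambda)
  fix j
  show "continuous_on S (\<lambda>x. case j of None \<Rightarrow> g x | Some i \<Rightarrow> f x $ i)"
    by (cases j) (auto intro: assms continuous_on_component)
qed

lemma K0_set_eq_image:
  "K0_set K = (\<lambda>((v, a), t). embed a 0 + t *\<^sub>R embed v 1) ` (K \<times> {0..1})"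
  unfolding K0_set_def by (auto simp: image_iff; force)

lemma compact_K0_set:
  assumes "compact K"
  shows "compact (K0_set K)"
proof -
  have "continuous_on (K \<times> {0..1}) (\<lambda>((v, a), t). embed a 0 + t *\<^sub>R embed v 1)"
    unfolding case_prod_beta by (intro continuous_intros continuous_on_embed)
  moreover have "compact (K \<times> {0..(1::real)})"
    using assms by (simp add: compact_Times)
  ultimately show ?thesis
    unfolding K0_set_eq_image by (rule compact_continuous_image)
qed

definition slope :: "real^('n option) \<Rightarrow> real^'n" where
  "slope w = (\<chi> i. w $ Some i / w $ None)"

lemma embed_slope:
  assumes "w $ None \<noteq> 0"
  shows "w = w $ None *\<^sub>R embed (slope w) 1"
proof (rule vec_eq_iff[THEN iffD2], rule allI)
  fix j
  show "w $ j = (w $ None *\<^sub>R embed (slope w) 1) $ j"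
    using assms by (cases j) (simp_all add: slope_def)
qed

lemma slope_scaleR: "c \<noteq> 0 \<Longrightarrow> slope (c *\<^sub>R w) = slope w"
  by (simp add: vec_eq_iff slope_def)

lemma slope_embed: "slope (embed v 1) = v"
  by (simp add: vec_eq_iff slope_def)

lemma open_slope_preimage:
  assumes "open V"
  shows "open {w. 0 < w $ None \<and> slope w \<in> V}"
proof -
  have upper: "open {w :: real^('n::finite option). 0 < w $ None}"
    by (intro open_Collect_less continuous_intros)
  have slope_cont: "continuous_on {w. 0 < w $ None} slope"
    unfolding slope_def by (intro continuous_on_vec_lambda continuous_intros) auto
  have "open ({w. 0 < w $ None} \<inter> slope -` V)"
    using continuous_open_preimage[OF slope_cont upper assms] .
  then show ?thesis
    by (simp add: vimage_def Collect_conj_eq)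
qed

lemma sgn_embed_one:
  shows "norm (sgn (embed v 1)) = 1" and "0 < sgn (embed v 1) $ None"
    and "slope (sgn (embed v 1)) = v"
proof -
  have "embed v 1 \<noteq> 0"
    by (metis embed_None zero_index zero_neq_one)
  then show "norm (sgn (embed v 1)) = 1" and "0 < sgn (embed v 1) $ None"
    and "slope (sgn (embed v 1)) = v"
    by (auto simp: sgn_div_norm norm_sgn slope_scaleR slope_embed)
qed

lemma unit_segment_in_K0_set:
  assumes "norm w = 1" and "0 < w $ None" and "slope w \<in> fst ` K"
  shows "\<exists>x. closed_segment x (x + w) \<subseteq> K0_set K"
proof -
  obtain a where a: "(slope w, a) \<in> K"
    using assms(3) by force
  have "w $ None \<le> 1"
    using component_le_norm_cart[of w None] assms(1) by simp
  have "y \<in> K0_set K" if y: "y \<in> closed_segment (embed a 0) (embed a 0 + w)" for y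
  proof -
    obtain s where s: "0 \<le> s" "s \<le> 1" "y = embed a 0 + s *\<^sub>R w"
      using y unfolding closed_segment_def by (auto simp: algebra_simps)
    then have "y = embed a 0 + (s * w $ None) *\<^sub>R embed (slope w) 1"
      using embed_slope[of w] assms(2) by (metis less_irrefl scaleR_scaleR)
    moreover have "s * w $ None \<in> {0..1}"
      using s assms(2) \<open>w $ None \<le> 1\<close> by (simp add: mult_le_one)
    ultimately show ?thesis
      unfolding K0_set_def using a by blast
  qed
  then show ?thesis
    by blast
qed

theorem proposition2p1:
  fixes K :: "((real^'n) \<times> (real^'n)) set"
  assumes "compact K"
    and "interior (fst ` K) \<noteq> {}"
  shows "\<exists>F. finite F \<and> (\<forall>f\<in>F. rotation f) \<and> kakeya_set (\<Union>f\<in>F. f ` K0_set K)"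
proof -
  obtain v0 where v0: "v0 \<in> interior (fst ` K)"
    using assms(2) by blast
  define U where "U = {w. 0 < w $ None \<and> slope w \<in> interior (fst ` K)}"
  have "open U"
    unfolding U_def by (simp add: open_slope_preimage)
  have "sgn (embed v0 1) \<in> U"
    unfolding U_def mem_Collect_eq sgn_embed_one(3) using v0 sgn_embed_one(2) by blast
  have segment: "\<exists>x. closed_segment x (x + w) \<subseteq> K0_set K" if "w \<in> U" and "norm w = 1" for w
    using that unit_segment_in_K0_set interior_subset unfolding U_def by blast
  have "2 \<le> CARD('n option)"
    by (simp add: card_UNIV_option)
  from kakeya_set_finite_rotation_images[OF this compact_K0_set[OF assms(1)] \<open>open U\<close>
      \<open>sgn (embed v0 1) \<in> U\<close> sgn_embed_one(1) segment]
  show ?thesis .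
qed

end
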